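(* Let $p$ be a prime, let $r$ be a prime different from $p$, and let $a,c,t$ be positive integers with $t\ge 2$ such that $c$ is a primitive divisor of $p^a-1$ and $\gcd\big(\tfrac{p^a-1}{c},r\big)=1$. Suppose that either (i) $r=2$ and $p^a\equiv 1\pmod 4$, or (ii) $r$ is odd and the multiplicative order of $p^a$ modulo $r^t$ equals $r^h$ for some $0\le h\le t-1$. Then $$g\Big(\tfrac{p^{ar^t}-1}{c\,r^t},\,p^{ar^t}\Big)=r^t\,g\Big(\tfrac{p^a-1}{c},\,p^a\Big).$$
   Context: For a prime power $q$ and a positive integer $k$, the Waring number $g(k,q)$ is the smallest $s$ (if it exists) such that every element of $\mathbb{F}_q$ is a sum of $s$ $k$-th powers of elements of $\mathbb{F}_q$. An integer $e$ is a primitive divisor of $p^a-1$ if $e\mid p^a-1$ and $e\nmid p^s-1$ for every $1\le s<a$. *)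

theory Defs
  imports "HOL-Number_Theory.Number_Theory"
begin

definition sum_of_kth_powers :: "nat \<Rightarrow> nat \<Rightarrow> 'a::field \<Rightarrow> bool" where
  "sum_of_kth_powers k s y \<longleftrightarrow>
     (\<exists>xs :: 'a list. length xs = s \<and> sum_list (map (\<lambda>x. x ^ k) xs) = y)"

text \<open>Waring number g(k,q) of the finite field given by the type 'a (with q = CARD('a)):
  the least s such that every element is a sum of s k-th powers.\<close>
definition waring_number :: "nat \<Rightarrow> 'a::{finite,field} itself \<Rightarrow> nat" where
  "waring_number k (_ :: 'a itself) =
     (LEAST s. \<forall>y :: 'a. sum_of_kth_powers k s y)"

definition primitive_divisor :: "nat \<Rightarrow> nat \<Rightarrow> nat \<Rightarrow> bool" where
  "primitive_divisor e p a \<longleftrightarrow>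
     e dvd p ^ a - 1 \<and> (\<forall>s. 1 \<le> s \<and> s < a \<longrightarrow> \<not> e dvd p ^ s - 1)"

end

theory Submission
  imports Defs "HOL-Algebra.Multiplicative_Group" "Berlekamp_Zassenhaus.Finite_Field"
begin

lemma power_mod_exponent:
  fixes x :: "'a::monoid_mult"
  assumes "x ^ n = 1"
  shows "x ^ m = x ^ (m mod n)"
proof -
  have "x ^ m = x ^ (n * (m div n) + m mod n)" by simp
  also have "\<dots> = (x ^ n) ^ (m div n) * x ^ (m mod n)" by (simp only: power_add power_mult)
  finally have "x ^ m = (x ^ n) ^ (m div n) * x ^ (m mod n)" .
  thus ?thesis using assms by simp
qed

lemma finite_field_card_ge_2: "2 \<le> CARD('a::{finite,field})"
proof -
  have "card {0::'a, 1} \<le> CARD('a)" by (rule card_mono) auto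
  thus ?thesis by simp
qed

lemma finite_field_pow_card: "(x::'a::{finite,field}) ^ CARD('a) = x"
proof (cases "x = 0")
  case False
  have "x * (\<Prod>y\<in>UNIV-{0}. x * y) = x * x ^ (CARD('a) - 1) * \<Prod>(UNIV-{0})"
    by (simp add: prod.distrib mult_ac)
  also have "x * x ^ (CARD('a) - 1) = x ^ CARD('a)"
    using finite_field_card_ge_2[where 'a='a] by (simp flip: power_Suc)
  also have "(\<Prod>y\<in>UNIV-{0}. x * y) = (\<Prod>y\<in>UNIV-{0}. y)"
    by (rule prod.reindex_bij_witness[of _ "\<lambda>y. y / x" "\<lambda>y. x * y"]) (use False in auto)
  finally show ?thesis by simp
qed (use finite_field_card_ge_2[where 'a='a] in simp)

lemma finite_field_pow_card_minus_one:
  assumes "(x::'a::{finite,field}) \<noteq> 0"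
  shows "x ^ (CARD('a) - 1) = 1"
proof -
  have "x * x ^ (CARD('a) - 1) = x * 1"
    using finite_field_pow_card[of x] finite_field_card_ge_2[where 'a='a] by (simp flip: power_Suc)
  thus ?thesis using assms by simp
qed

lemma finite_field_pow_card_power: "(x::'a::{finite,field}) ^ (CARD('a) ^ n) = x"
  by (induction n) (simp_all add: power_mult finite_field_pow_card)

lemma CHAR_finite_field:
  assumes "prime p" and "CARD('a::{finite,field}) = p ^ a"
  shows "CHAR('a) = p"
proof -
  have "(\<Sum>x\<in>(UNIV::'a set). x + 1) = (\<Sum>x\<in>UNIV. x)"
    by (rule sum.reindex_bij_witness[of _ "\<lambda>x. x - 1" "\<lambda>x. x + 1"]) auto
  hence "of_nat CARD('a) = (0::'a)" by (simp add: sum.distrib)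
  hence "CHAR('a) dvd CARD('a)" by (simp only: of_nat_eq_0_iff_char_dvd)
  hence "CHAR('a) dvd p ^ a" using assms(2) by simp
  moreover have "prime CHAR('a)" by (intro prime_CHAR_semidom finite_imp_CHAR_pos) simp
  ultimately have "CHAR('a) dvd p" using prime_dvd_power by blast
  thus ?thesis using assms(1) \<open>prime CHAR('a)\<close> primes_dvd_imp_eq by blast
qed

lemma finite_field_generator:
  "\<exists>g::'a::{finite,field}. (\<forall>x. x \<noteq> 0 \<longrightarrow> (\<exists>i. x = g ^ i)) \<and> (\<forall>i. g ^ i = 1 \<longleftrightarrow> (CARD('a) - 1) dvd i)"
proof -
  define K :: "'a ring" where "K = \<lparr>carrier = UNIV, mult = (*), one = 1, zero = 0, add = (+)\<rparr>"
  interpret K: field K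
  proof -
    have "\<exists>y. x + y = 0" for x :: 'a by (metis add.right_inverse)
    moreover have "x \<noteq> 0 \<Longrightarrow> \<exists>y. x * y = 1" for x :: 'a by (metis right_inverse)
    ultimately show "field K" unfolding K_def
      by unfold_locales (auto simp: algebra_simps Units_def)
  qed
  have pow: "x [^]\<^bsub>K\<^esub> n = x ^ n" for x :: 'a and n :: nat
    by (induction n) (simp_all add: nat_pow_def K_def mult.commute)
  have carrier: "carrier (mult_of K) = UNIV - {0}" by (simp add: K_def)
  obtain g :: 'a where "carrier (mult_of K) = {g [^]\<^bsub>K\<^esub> i | i::nat. i \<in> UNIV}"
    using K.finite_field_mult_group_has_gen by (auto simp: K_def)
  hence g: "UNIV - {0} = {g ^ i | i::nat. i \<in> UNIV}" by (simp only: carrier pow)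
  have gen: "\<exists>i. x = g ^ i" if "x \<noteq> 0" for x :: 'a
    using that g by auto
  have "g \<in> UNIV - {0}" unfolding g by (metis (mono_tags) UNIV_I mem_Collect_eq power_one_right)
  hence "g \<noteq> 0" by simp
  define N where "N = CARD('a) - 1"
  have gN: "g ^ N = 1" unfolding N_def by (rule finite_field_pow_card_minus_one) fact
  have ord: "g ^ i = 1 \<longleftrightarrow> N dvd i" for i
  proof
    assume gi: "g ^ i = 1"
    show "N dvd i"
    proof (rule ccontr)
      define j where "j = i mod N"
      assume "\<not> N dvd i"
      hence j: "0 < j" "j < N" using finite_field_card_ge_2[where 'a='a]
        by (auto simp: j_def N_def mod_greater_zero_iff_not_dvd)
      have gj: "g ^ j = 1" using gi power_mod_exponent[OF gN, of i] by (simp add: j_def)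
      have "UNIV - {0} \<subseteq> (\<lambda>m. g ^ m) ` {..<j}"
      proof
        fix x :: 'a assume "x \<in> UNIV - {0}"
        then obtain m where "x = g ^ m" using gen by auto
        hence "x = g ^ (m mod j)" using power_mod_exponent[OF gj] by simp
        thus "x \<in> (\<lambda>m. g ^ m) ` {..<j}" using j by auto
      qed
      hence "card (UNIV - {0::'a}) \<le> card ((\<lambda>m. g ^ m) ` {..<j})" by (intro card_mono) auto
      also have "\<dots> \<le> j" using card_image_le[of "{..<j}" "\<lambda>m. g ^ m"] by simp
      finally show False using j by (simp add: card_Diff_singleton N_def)
    qed
  qed (auto simp: power_mult gN)
  show ?thesis
    by (intro exI[of _ g] conjI allI impI) (simp_all add: gen ord[unfolded N_def])
qed

lemma finite_field_root_of_unity: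
  assumes "c dvd CARD('a::{finite,field}) - 1"
  shows "\<exists>\<theta>::'a. (\<forall>n. \<theta> ^ n = 1 \<longleftrightarrow> c dvd n) \<and> (\<forall>y. y ^ c = 1 \<longrightarrow> (\<exists>i. y = \<theta> ^ i))"
proof -
  obtain g :: 'a where "(\<forall>x. x \<noteq> 0 \<longrightarrow> (\<exists>i. x = g ^ i)) \<and> (\<forall>i. g ^ i = 1 \<longleftrightarrow> (CARD('a) - 1) dvd i)"
    using finite_field_generator[where 'a='a] by (rule exE)
  hence gen: "\<And>x. x \<noteq> 0 \<Longrightarrow> \<exists>i. x = g ^ i" and ord: "\<And>i. g ^ i = 1 \<longleftrightarrow> (CARD('a) - 1) dvd i"
    by simp_all
  obtain k where k: "CARD('a) - 1 = c * k" using assms by blast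
  have "0 < k" "0 < c" using k finite_field_card_ge_2[where 'a='a] by (auto intro!: Nat.gr0I)
  show ?thesis
  proof (intro exI[of _ "g ^ k"] conjI allI impI)
    show "(g ^ k) ^ n = 1 \<longleftrightarrow> c dvd n" for n
      unfolding power_mult[symmetric] ord k using \<open>0 < k\<close> by (simp add: mult.commute)
  next
    fix y :: 'a assume y: "y ^ c = 1"
    hence "y \<noteq> 0" using \<open>0 < c\<close> by (auto simp: zero_power)
    then obtain i where i: "y = g ^ i" using gen by blast
    hence "g ^ (i * c) = 1" using y by (simp add: power_mult)
    hence "c * k dvd c * i" using ord k by (simp add: mult.commute)
    hence "k dvd i" using \<open>0 < c\<close> by simp
    thus "\<exists>j. y = (g ^ k) ^ j" using i by (auto simp flip: power_mult)
  qed
qed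

lemma card_finite_field_roots_of_unity:
  assumes "c dvd CARD('a::{finite,field}) - 1"
  shows "card {y::'a. y ^ c = 1} = c"
proof -
  obtain \<theta> :: 'a where "(\<forall>n. \<theta> ^ n = 1 \<longleftrightarrow> c dvd n) \<and> (\<forall>y. y ^ c = 1 \<longrightarrow> (\<exists>i. y = \<theta> ^ i))"
    using finite_field_root_of_unity[OF assms] by (rule exE)
  hence ord: "\<And>n. \<theta> ^ n = 1 \<longleftrightarrow> c dvd n" and gen: "\<And>y. y ^ c = 1 \<Longrightarrow> \<exists>i. y = \<theta> ^ i"
    by simp_all
  have c: "0 < c" using assms finite_field_card_ge_2[where 'a='a] by (intro Nat.gr0I) auto
  have "{y::'a. y ^ c = 1} = (\<lambda>i. \<theta> ^ i) ` {..<c}"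
  proof (intro equalityI subsetI)
    fix y :: 'a assume "y \<in> {y. y ^ c = 1}"
    then obtain i where "y = \<theta> ^ i" using gen by blast
    hence "y = \<theta> ^ (i mod c)" using power_mod_exponent[of \<theta> c i] ord by simp
    thus "y \<in> (\<lambda>i. \<theta> ^ i) ` {..<c}" using c by auto
  qed (auto simp: ord mult.commute simp flip: power_mult)
  moreover have "inj_on (\<lambda>i. \<theta> ^ i) {..<c}"
  proof (rule inj_onI)
    have "\<theta> \<noteq> 0" using ord[of c] c by (auto simp: zero_power)
    have le: "i = j" if "j < c" "\<theta> ^ i = \<theta> ^ j" "i \<le> j" for i j
    proof (rule ccontr)
      have "\<theta> ^ i * \<theta> ^ (j - i) = \<theta> ^ j" using that(3) by (simp flip: power_add)
      hence "\<theta> ^ i * \<theta> ^ (j - i) = \<theta> ^ i * 1" using that(2) by simp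
      hence "c dvd j - i" using \<open>\<theta> \<noteq> 0\<close> ord by simp
      moreover assume "i \<noteq> j"
      ultimately have "c \<le> j - i" using that(3) by (intro dvd_imp_le) auto
      thus False using that(1) by simp
    qed
    show "i = j" if "i \<in> {..<c}" "j \<in> {..<c}" "\<theta> ^ i = \<theta> ^ j" for i j
      using that le[of j i] le[of i j] by (cases "i \<le> j") auto
  qed
  ultimately show ?thesis by (simp add: card_image)
qed

lemma finite_field_roots_of_unity_eq_powers:
  assumes "k * c = CARD('a::{finite,field}) - 1"
  shows "y ^ c = 1 \<longleftrightarrow> (\<exists>x::'a. x \<noteq> 0 \<and> y = x ^ k)"
proof
  obtain g :: 'a where "(\<forall>x. x \<noteq> 0 \<longrightarrow> (\<exists>i. x = g ^ i)) \<and> (\<forall>i. g ^ i = 1 \<longleftrightarrow> (CARD('a) - 1) dvd i)"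
    using finite_field_generator[where 'a='a] by (rule exE)
  hence gen: "\<And>x. x \<noteq> 0 \<Longrightarrow> \<exists>i. x = g ^ i" and ord: "\<And>i. g ^ i = 1 \<longleftrightarrow> (CARD('a) - 1) dvd i"
    by simp_all
  have "0 < c" "0 < k" using assms finite_field_card_ge_2[where 'a='a] by (auto intro!: Nat.gr0I)
  assume y: "y ^ c = 1"
  hence "y \<noteq> 0" using \<open>0 < c\<close> by (auto simp: zero_power)
  then obtain i where i: "y = g ^ i" using gen by blast
  hence "k * c dvd i * c" using y ord[of "i * c"] assms by (simp add: power_mult)
  hence "k dvd i" using \<open>0 < c\<close> by simp
  then obtain j where "i = k * j" by blast
  hence "y = (g ^ j) ^ k" using i by (simp add: mult.commute flip: power_mult)
  moreover from this have "g ^ j \<noteq> 0" using \<open>y \<noteq> 0\<close> \<open>0 < k\<close> by (auto simp: zero_power)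
  ultimately show "\<exists>x. x \<noteq> 0 \<and> y = x ^ k" by blast
next
  assume "\<exists>x::'a. x \<noteq> 0 \<and> y = x ^ k"
  thus "y ^ c = 1" using finite_field_pow_card_minus_one assms by (auto simp flip: power_mult)
qed


lemma sum_of_kth_powers_0: "sum_of_kth_powers k 0 0"
  by (simp add: sum_of_kth_powers_def)

lemma sum_of_kth_powers_power: "sum_of_kth_powers k 1 (x ^ k)"
  unfolding sum_of_kth_powers_def by (intro exI[of _ "[x]"]) simp

lemma sum_of_kth_powers_zero: "0 < k \<Longrightarrow> sum_of_kth_powers k s 0"
  unfolding sum_of_kth_powers_def by (intro exI[of _ "replicate s 0"]) (simp add: zero_power sum_list_replicate)

lemma sum_of_kth_powers_add:
  assumes "sum_of_kth_powers k s x" and "sum_of_kth_powers k s' y"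
  shows "sum_of_kth_powers k (s + s') (x + y)"
proof -
  obtain xs ys where "length xs = s" "x = sum_list (map (\<lambda>v. v ^ k) xs)"
    and "length ys = s'" "y = sum_list (map (\<lambda>v. v ^ k) ys)"
    using assms unfolding sum_of_kth_powers_def by auto
  thus ?thesis unfolding sum_of_kth_powers_def by (intro exI[of _ "xs @ ys"]) simp
qed

lemma sum_of_kth_powers_sum:
  assumes "finite I" and "\<And>i. i \<in> I \<Longrightarrow> sum_of_kth_powers k s (f i)"
  shows "sum_of_kth_powers k (card I * s) (\<Sum>i\<in>I. f i)"
  using assms by (induction I rule: finite_induct) (simp_all add: sum_of_kth_powers_0 sum_of_kth_powers_add)

lemma sum_of_kth_powers_mono:
  assumes "sum_of_kth_powers k s y" and "s \<le> s'" and "0 < k"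
  shows "sum_of_kth_powers k s' y"
  using sum_of_kth_powers_add[OF assms(1) sum_of_kth_powers_zero[OF assms(3), of "s' - s"]] assms(2)
  by simp

lemma sum_of_kth_powers_image:
  assumes "\<And>x y. h (x + y) = h x + h y" and "h 0 = 0" and "\<And>v. \<exists>u. h (v ^ k) = u ^ k'"
    and "sum_of_kth_powers k s y"
  shows "sum_of_kth_powers k' s (h y)"
proof -
  obtain U where U: "\<And>v. h (v ^ k) = U v ^ k'" using assms(3) by metis
  obtain xs where xs: "length xs = s" "y = sum_list (map (\<lambda>v. v ^ k) xs)"
    using assms(4) unfolding sum_of_kth_powers_def by auto
  have "h (sum_list (map (\<lambda>v. v ^ k) xs)) = sum_list (map (\<lambda>u. u ^ k') (map U xs))"
    by (induction xs) (simp_all add: assms(1,2) U)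
  thus ?thesis unfolding sum_of_kth_powers_def using xs by (intro exI[of _ "map U xs"]) simp
qed

lemma sum_of_kth_powers_mult:
  assumes "sum_of_kth_powers k s x" and "sum_of_kth_powers k s' y"
  shows "sum_of_kth_powers k (s * s') (x * y)"
proof -
  obtain xs where xs: "length xs = s" "x = sum_list (map (\<lambda>v. v ^ k) xs)"
    using assms(1) unfolding sum_of_kth_powers_def by auto
  have "sum_of_kth_powers k (length xs * s') (sum_list (map (\<lambda>v. v ^ k) xs) * y)"
  proof (induction xs)
    case Nil
    show ?case by (simp add: sum_of_kth_powers_0)
  next
    case (Cons a xs)
    have "\<exists>u. a ^ k * v ^ k = u ^ k" for v by (metis power_mult_distrib)
    hence "sum_of_kth_powers k s' (a ^ k * y)"
      by (intro sum_of_kth_powers_image[OF _ _ _ assms(2)]) (simp_all add: distrib_left)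
    with Cons.IH show ?case by (simp add: distrib_right sum_of_kth_powers_add)
  qed
  thus ?thesis using xs by simp
qed

lemma sum_of_kth_powers_imp_sum:
  assumes "sum_of_kth_powers k s y"
  shows "\<exists>u. y = (\<Sum>j<s. u j ^ k)"
proof -
  obtain xs where "length xs = s" "y = sum_list (map (\<lambda>v. v ^ k) xs)"
    using assms unfolding sum_of_kth_powers_def by auto
  thus ?thesis by (intro exI[of _ "nth xs"]) (simp add: sum_list_sum_nth atLeast0LessThan)
qed

lemma waring_number_spec:
  assumes "\<exists>s. \<forall>y::'a::{finite,field}. sum_of_kth_powers k s y"
  shows "sum_of_kth_powers k (waring_number k TYPE('a)) (y::'a)"
  using LeastI_ex[OF assms] unfolding waring_number_def by blast

lemma waring_number_le:
  assumes "\<And>y::'a::{finite,field}. sum_of_kth_powers k s y"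
  shows "waring_number k TYPE('a) \<le> s"
  unfolding waring_number_def by (rule Least_le) (use assms in blast)

lemma waring_number_attained:
  assumes "0 < k"
  shows "\<exists>w::'a::{finite,field}. \<forall>s. sum_of_kth_powers k s w \<longrightarrow> waring_number k TYPE('a) \<le> s"
proof (cases "waring_number k TYPE('a) = 0")
  case False
  hence "\<not> (\<forall>y::'a. sum_of_kth_powers k (waring_number k TYPE('a) - 1) y)"
    using not_less_Least[of "waring_number k TYPE('a) - 1" "\<lambda>s. \<forall>y::'a. sum_of_kth_powers k s y"]
    unfolding waring_number_def by simp
  then obtain w :: 'a where w: "\<not> sum_of_kth_powers k (waring_number k TYPE('a) - 1) w" by blast
  have "waring_number k TYPE('a) \<le> s" if "sum_of_kth_powers k s w" for s
  proof (rule ccontr)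
    assume "\<not> waring_number k TYPE('a) \<le> s"
    hence "s \<le> waring_number k TYPE('a) - 1" by simp
    with sum_of_kth_powers_mono[OF that this assms] w show False by simp
  qed
  thus ?thesis by blast
qed simp

lemma card_additive_subgroup_dvd:
  fixes T :: "'a::{finite,ab_group_add} set"
  assumes "0 \<in> T" and "\<And>x y. x \<in> T \<Longrightarrow> y \<in> T \<Longrightarrow> x + y \<in> T" and "\<And>x. x \<in> T \<Longrightarrow> - x \<in> T"
  shows "card T dvd CARD('a)"
proof -
  define G :: "'a monoid" where "G = \<lparr>carrier = UNIV, mult = (+), one = 0\<rparr>"
  interpret G: group G
    unfolding G_def by (rule groupI) (auto simp: add.assoc intro: exI[of _ "- x" for x])
  have "inv\<^bsub>G\<^esub> x = - x" for x by (rule G.inv_equality) (simp_all add: G_def)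
  hence "subgroup T G" using assms by (intro G.subgroupI) (auto simp: G_def)
  from G.lagrange[OF this] have "card (rcosets\<^bsub>G\<^esub> T) * card T = CARD('a)"
    by (simp add: Coset.order_def G_def)
  thus ?thesis by (metis dvd_triv_right)
qed

lemma power_card_eq_one_of_mult_closed:
  fixes S :: "'a::field set"
  assumes "finite S" and "0 \<notin> S" and "\<theta> \<in> S" and "\<And>x y. x \<in> S \<Longrightarrow> y \<in> S \<Longrightarrow> x * y \<in> S"
  shows "\<theta> ^ card S = 1"
proof -
  have "\<theta> \<noteq> 0" using assms(2,3) by blast
  hence inj: "inj_on (\<lambda>y. \<theta> * y) S" by (auto intro: inj_onI)
  have "(\<lambda>y. \<theta> * y) ` S = S"
    using assms inj by (intro card_subset_eq) (auto simp: card_image)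
  hence "(\<Prod>y\<in>S. \<theta> * y) = (\<Prod>y\<in>S. y)"
    using prod.reindex[OF inj, of id] by simp
  hence "\<theta> ^ card S * (\<Prod>y\<in>S. y) = 1 * (\<Prod>y\<in>S. y)" by (simp add: prod.distrib)
  moreover have "(\<Prod>y\<in>S. y) \<noteq> 0" using assms(1,2) by (auto simp: prod_zero_iff)
  ultimately show ?thesis by (metis mult_right_cancel)
qed

lemma sum_of_kth_powers_uminus:
  assumes "sum_of_kth_powers k s (x::'a::{finite,field})"
  shows "sum_of_kth_powers k ((CHAR('a) - 1) * s) (- x)"
proof -
  have "sum_of_kth_powers k (card {..<CHAR('a) - 1} * s) (\<Sum>i<CHAR('a) - 1. x)"
    by (rule sum_of_kth_powers_sum) (simp_all add: assms)
  moreover have "(\<Sum>i<CHAR('a) - 1. x) = (of_nat CHAR('a) - 1) * x"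
    using finite_imp_CHAR_pos[where 'a='a] by (simp add: of_nat_diff)
  ultimately show ?thesis by simp
qed

text \<open>The sums of \<open>k\<close>-th powers form a subfield; it contains a primitive \<open>c\<close>-th root of unity,
  so primitivity of \<open>c\<close> leaves only the whole field.\<close>
lemma sums_of_kth_powers_exhaust:
  assumes "prime p" and "CARD('a::{finite,field}) = p ^ a"
    and "k * c = CARD('a) - 1" and "primitive_divisor c p a"
  shows "\<exists>s. sum_of_kth_powers k s (y::'a)"
proof -
  define T where "T = {y::'a. \<exists>s. sum_of_kth_powers k s y}"
  have Tpow: "x ^ k \<in> T" for x unfolding T_def using sum_of_kth_powers_power by blast
  have T0: "0 \<in> T" unfolding T_def using sum_of_kth_powers_0 by blast
  have T1: "1 \<in> T" using Tpow[of 1] by simp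
  have Tadd: "x + y \<in> T" and Tmult: "x * y \<in> T" if xy: "x \<in> T" "y \<in> T" for x y
  proof -
    obtain s s' where "sum_of_kth_powers k s x" "sum_of_kth_powers k s' y"
      using xy unfolding T_def by blast
    from sum_of_kth_powers_add[OF this] sum_of_kth_powers_mult[OF this]
    show "x + y \<in> T" "x * y \<in> T" unfolding T_def by blast+
  qed
  have Tneg: "- x \<in> T" if "x \<in> T" for x
    using that sum_of_kth_powers_uminus unfolding T_def by blast
  have "card T dvd p ^ a" using card_additive_subgroup_dvd[OF T0 Tadd Tneg] assms(2) by simp
  then obtain b where b: "b \<le> a" "card T = p ^ b" using divides_primepow_nat[OF assms(1)] by blast
  have "2 \<le> card T" using card_mono[of T "{0, 1}"] T0 T1 by simp
  hence "1 \<le> b" using b by (cases b) auto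
  have "c dvd CARD('a) - 1" using assms(3) by (metis dvd_triv_right)
  then obtain \<theta> :: 'a where "(\<forall>n. \<theta> ^ n = 1 \<longleftrightarrow> c dvd n) \<and> (\<forall>y. y ^ c = 1 \<longrightarrow> (\<exists>i. y = \<theta> ^ i))"
    by (rule finite_field_root_of_unity[THEN exE])
  hence \<theta>: "\<And>n. \<theta> ^ n = 1 \<longleftrightarrow> c dvd n" by simp
  have "\<theta> ^ c = 1" using \<theta> by simp
  hence "\<theta> \<in> T - {0}" using finite_field_roots_of_unity_eq_powers[OF assms(3)] Tpow by auto
  hence "\<theta> ^ card (T - {0}) = 1"
    using Tmult by (intro power_card_eq_one_of_mult_closed) auto
  hence "c dvd p ^ b - 1" using \<theta> b T0 by simp
  hence "\<not> b < a" using assms(4) \<open>1 \<le> b\<close> unfolding primitive_divisor_def by blast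
  hence "T = UNIV" using b assms(2) by (intro card_subset_eq) auto
  hence "y \<in> T" by simp
  thus ?thesis unfolding T_def by simp
qed

lemma ex_waring_bound:
  assumes "prime p" and "CARD('a::{finite,field}) = p ^ a"
    and "k * c = CARD('a) - 1" and "primitive_divisor c p a"
  shows "\<exists>s. \<forall>y::'a. sum_of_kth_powers k s y"
proof -
  have "\<forall>y::'a. \<exists>s. sum_of_kth_powers k s y" using sums_of_kth_powers_exhaust[OF assms] by simp
  then obtain S where S: "\<And>y::'a. sum_of_kth_powers k (S y) y" by metis
  have "0 < k" using assms(3) finite_field_card_ge_2[where 'a='a] by (intro Nat.gr0I) simp
  have "sum_of_kth_powers k (Max (range S)) y" for y :: 'a
    by (rule sum_of_kth_powers_mono[OF S _ \<open>0 < k\<close>]) (rule Max_ge, auto)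
  thus ?thesis by blast
qed

subsection \<open>Lifting the exponent\<close>

lemma one_plus_power_expansion:
  fixes z :: int
  shows "\<exists>Y. (1 + z) ^ n = 1 + z * (int n + z * int (n choose 2) + z^2 * Y)"
proof (induction n)
  case 0
  show ?case by (intro exI[of _ 0]) simp
next
  case (Suc n)
  then obtain Y where Y: "(1 + z) ^ n = 1 + z * (int n + z * int (n choose 2) + z^2 * Y)" by blast
  have "Suc n choose 2 = (n choose 2) + n" by (simp add: numeral_2_eq_2)
  thus ?case
    by (intro exI[of _ "Y + int (n choose 2) + z * Y"]) (simp add: Y algebra_simps power2_eq_square)
qed

lemma one_plus_prime_power_power_prime:
  fixes r m :: nat and u :: int
  assumes "prime r" and "1 \<le> m" and "odd r \<or> 2 \<le> m" and "\<not> int r dvd u"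
  shows "\<exists>u'. (1 + int r ^ m * u) ^ r = 1 + int r ^ (m + 1) * u' \<and> \<not> int r dvd u'"
proof -
  define z where "z = int r ^ m * u"
  obtain Y where Y: "(1 + z) ^ r = 1 + z * (int r + z * int (r choose 2) + z^2 * Y)"
    using one_plus_power_expansion by blast
  have rz: "int r dvd z" unfolding z_def using assms(2) by (simp add: dvd_power)
  have "int r ^ 2 dvd z * int (r choose 2)"
  proof (cases "2 \<le> m")
    case True
    hence "int r ^ 2 dvd int r ^ m" by (simp add: le_imp_power_dvd)
    thus ?thesis unfolding z_def by (simp add: mult.assoc)
  next
    case False
    hence "odd r" using assms(3) by simp
    hence "2 < r" using prime_ge_2_nat[OF assms(1)] by (cases "r = 2") auto
    hence "r dvd r choose 2" using assms(1) by (intro dvd_choose_prime) auto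
    thus ?thesis using rz by (simp add: power2_eq_square mult_dvd_mono)
  qed
  moreover have "int r ^ 2 dvd z^2 * Y" using rz by (simp add: dvd_power_same)
  ultimately have "int r ^ 2 dvd z * int (r choose 2) + z^2 * Y" by (rule dvd_add)
  then obtain W where W: "z * int (r choose 2) + z^2 * Y = int r ^ 2 * W" by (elim dvdE)
  have "(1 + z) ^ r = 1 + z * (int r + (z * int (r choose 2) + z^2 * Y))" by (simp add: Y add.assoc)
  also have "\<dots> = 1 + z * (int r + int r ^ 2 * W)" by (simp only: W)
  also have "\<dots> = 1 + int r ^ (m + 1) * (u * (1 + int r * W))"
    unfolding z_def by (simp add: algebra_simps power2_eq_square)
  finally have eq: "(1 + z) ^ r = 1 + int r ^ (m + 1) * (u * (1 + int r * W))" .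
  have "\<not> int r dvd 1 + int r * W"
    using prime_gt_1_nat[OF assms(1)] by (simp add: dvd_add_left_iff)
  hence "\<not> int r dvd u * (1 + int r * W)"
    using assms(1,4) by (simp add: prime_dvd_mult_iff)
  thus ?thesis using eq unfolding z_def by blast
qed

lemma one_plus_prime_power_power_prime_power:
  fixes r m j :: nat and u :: int
  assumes "prime r" and "1 \<le> m" and "odd r \<or> 2 \<le> m" and "\<not> int r dvd u"
  shows "\<exists>u'. (1 + int r ^ m * u) ^ (r ^ j) = 1 + int r ^ (m + j) * u' \<and> \<not> int r dvd u'"
proof (induction j)
  case (Suc j)
  then obtain u' where u': "(1 + int r ^ m * u) ^ (r ^ j) = 1 + int r ^ (m + j) * u'" "\<not> int r dvd u'"
    by blast
  have "1 \<le> m + j" "odd r \<or> 2 \<le> m + j" using assms(2,3) by auto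
  then obtain u'' where "(1 + int r ^ (m + j) * u') ^ r = 1 + int r ^ (m + j + 1) * u''" "\<not> int r dvd u''"
    using one_plus_prime_power_power_prime[OF assms(1) _ _ u'(2)] by blast
  moreover have "(1 + int r ^ m * u) ^ (r ^ Suc j) = ((1 + int r ^ m * u) ^ (r ^ j)) ^ r"
    by (simp add: mult.commute flip: power_mult)
  ultimately show ?case using u'(1) by auto
qed (use assms(4) in auto)

lemma prime_power_dvd_power_prime_power_minus_one:
  fixes q r v u j :: nat
  assumes "prime r" and "q = 1 + r ^ v * u" and "\<not> r dvd u" and "1 \<le> v" and "odd r \<or> 2 \<le> v"
  shows "r ^ (v + j) dvd q ^ (r ^ j) - 1" and "\<not> r ^ (v + j + 1) dvd q ^ (r ^ j) - 1"
proof -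
  obtain w where w: "(1 + int r ^ v * int u) ^ (r ^ j) = 1 + int r ^ (v + j) * w" "\<not> int r dvd w"
    using one_plus_prime_power_power_prime_power[OF assms(1,4,5), of "int u" j] assms(3) by auto
  have eq: "int (q ^ (r ^ j) - 1) = int r ^ (v + j) * w"
    using w(1) assms(2) by (simp add: of_nat_diff)
  have "int (r ^ (v + j)) dvd int (q ^ (r ^ j) - 1)" unfolding eq by simp
  thus "r ^ (v + j) dvd q ^ (r ^ j) - 1" by (simp only: int_dvd_int_iff)
  show "\<not> r ^ (v + j + 1) dvd q ^ (r ^ j) - 1"
  proof
    assume "r ^ (v + j + 1) dvd q ^ (r ^ j) - 1"
    hence "r ^ (v + j) * r dvd q ^ (r ^ j) - 1" by (simp add: power_add mult_ac)
    hence "int (r ^ (v + j) * r) dvd int (q ^ (r ^ j) - 1)" by (simp only: int_dvd_int_iff)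
    hence "int r ^ (v + j) * int r dvd int r ^ (v + j) * w" unfolding eq by simp
    hence "int r dvd w" using prime_gt_0_nat[OF assms(1)] by (subst (asm) dvd_times_left_cancel_iff) auto
    with w(2) show False ..
  qed
qed

lemma not_dvd_power_minus_one_below_order:
  fixes q r n t d :: nat
  assumes "prime r" and "1 \<le> q" and "r ^ n dvd q ^ (r ^ t) - 1"
    and "0 < t \<Longrightarrow> \<not> r ^ n dvd q ^ (r ^ (t - 1)) - 1" and "0 < d" and "d < r ^ t"
  shows "\<not> r ^ n dvd q ^ d - 1"
proof
  have cong: "[q ^ e = 1] (mod r ^ n) \<longleftrightarrow> r ^ n dvd q ^ e - 1" for e
    using assms(2) by (simp add: cong_altdef_nat)
  assume "r ^ n dvd q ^ d - 1"
  hence d: "ord (r ^ n) q dvd d" using cong ord_divides by blast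
  have "ord (r ^ n) q dvd r ^ t" using assms(3) cong ord_divides by blast
  then obtain s where s: "s \<le> t" "ord (r ^ n) q = r ^ s" by (auto simp: divides_primepow_nat[OF assms(1)])
  show False
  proof (cases "s = t")
    case True
    thus False using d s assms(5,6) by (simp add: nat_dvd_not_less)
  next
    case False
    hence "ord (r ^ n) q dvd r ^ (t - 1)" using s by (simp add: le_imp_power_dvd)
    hence "r ^ n dvd q ^ (r ^ (t - 1)) - 1" using cong ord_divides by blast
    thus False using assms(4) s False by simp
  qed
qed

lemma minus_one_dvd_power_minus_one: "(q::nat) - 1 dvd q ^ n - 1"
proof (cases "q = 0")
  case False
  hence "[q ^ n = 1 ^ n] (mod q - 1)" by (intro cong_pow) (simp add: cong_altdef_nat)
  thus ?thesis using False by (simp add: cong_altdef_nat Suc_le_eq)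
qed (simp add: power_0_left)

lemma prime_power_dvd_divisor:
  fixes q r c :: nat
  assumes "prime r" and "q - 1 = r ^ v * u" and "\<not> r dvd u" and "c dvd q - 1"
    and "coprime ((q - 1) div c) r"
  obtains c0 where "c = r ^ v * c0" and "\<not> r dvd c0"
proof -
  obtain m where m: "q - 1 = c * m" using assms(4) by blast
  have "coprime (r ^ v) m" using assms(4,5) m by (cases "c = 0") (auto simp: coprime_commute)
  moreover have "c * m = r ^ v * u" using assms(2) m by simp
  hence "r ^ v dvd c * m" by simp
  ultimately have "r ^ v dvd c" by (simp add: coprime_dvd_mult_left_iff)
  then obtain c0 where c0: "c = r ^ v * c0" by (elim dvdE)
  have "\<not> r dvd c0"
  proof
    assume "r dvd c0"
    hence "r ^ v * r dvd c" using c0 by simp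
    hence "r ^ v * r dvd q - 1" using assms(4) by (rule dvd_trans)
    hence "r ^ v * r dvd r ^ v * u" using assms(2) by simp
    thus False using assms(1,3) by (simp add: prime_gt_0_nat)
  qed
  thus ?thesis using that c0 by blast
qed

lemma primitive_divisor_mult_prime_power:
  fixes q r c t :: nat
  assumes "prime r" and "2 \<le> q" and "c dvd q - 1" and "coprime ((q - 1) div c) r"
    and "r dvd q - 1" and "r = 2 \<Longrightarrow> 4 dvd q - 1"
  shows "c * r ^ t dvd q ^ (r ^ t) - 1"
    and "\<And>d. 0 < d \<Longrightarrow> d < r ^ t \<Longrightarrow> \<not> c * r ^ t dvd q ^ d - 1"
proof -
  have "q - 1 \<noteq> 0" "\<not> is_unit r" using assms(1,2) by (auto simp: prime_gt_1_nat)
  then obtain u where u: "q - 1 = r ^ multiplicity r (q - 1) * u" "\<not> r dvd u"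
    by (rule multiplicity_decompose')
  define v where "v = multiplicity r (q - 1)"
  have v1: "1 \<le> v" using u assms(5) by (cases v) (auto simp: v_def)
  have v2: "odd r \<or> 2 \<le> v"
  proof (cases "r = 2")
    case True
    hence "4 dvd 2 ^ v * u" using assms(6) u(1) v_def by simp
    hence "v \<noteq> 1" using u(2) True by (auto simp: dvd_def)
    thus ?thesis using v1 by simp
  next
    case False
    thus ?thesis using prime_ge_2_nat[OF assms(1)] prime_odd_nat[OF assms(1)] by simp
  qed
  have q: "q = 1 + r ^ v * u" using u(1) assms(2) v_def by simp
  note exact = prime_power_dvd_power_prime_power_minus_one[OF assms(1) q u(2) v1 v2]
  obtain c0 where c0: "c = r ^ v * c0" "\<not> r dvd c0"
    using prime_power_dvd_divisor[OF assms(1) u(1)[folded v_def] u(2) assms(3,4)] .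
  have crt: "c * r ^ t = r ^ (v + t) * c0" using c0 by (simp add: power_add algebra_simps)
  have "c0 dvd c" using c0 by simp
  hence "c0 dvd q ^ (r ^ t) - 1"
    using assms(3) minus_one_dvd_power_minus_one by (blast intro: dvd_trans)
  moreover have "coprime (r ^ (v + t)) c0" using c0(2) assms(1) by (simp add: prime_imp_coprime)
  ultimately show "c * r ^ t dvd q ^ (r ^ t) - 1" unfolding crt by (intro divides_mult exact(1))
  fix d assume d: "0 < d" "d < r ^ t"
  have below: "\<not> r ^ (v + t) dvd q ^ (r ^ (t - 1)) - 1" if "0 < t"
  proof -
    have "v + (t - 1) + 1 = v + t" using that by simp
    thus ?thesis using exact(2)[of "t - 1"] by (simp only: not_False_eq_True)
  qed
  have "1 \<le> q" using assms(2) by simp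
  hence "\<not> r ^ (v + t) dvd q ^ d - 1"
    using not_dvd_power_minus_one_below_order[OF assms(1) _ exact(1)[of t] below d] by blast
  thus "\<not> c * r ^ t dvd q ^ d - 1" unfolding crt using dvd_mult_left by blast
qed

lemma prime_dvd_minus_one_of_ord_prime_power:
  fixes q r t h :: nat
  assumes "prime r" and "\<not> r dvd q" and "1 \<le> t" and "ord (r ^ t) q = r ^ h"
  shows "r dvd q - 1"
proof -
  have "[q ^ r ^ h = 1] (mod r ^ t)" using ord[of q "r ^ t"] unfolding assms(4) .
  moreover have "r dvd r ^ t" using assms(3) by (cases t) auto
  ultimately have "[q ^ r ^ h = 1] (mod r)" by (rule cong_dvd_modulus_nat)
  hence "ord r q dvd r ^ h" by (simp add: ord_divides')
  moreover have "ord r q dvd r - 1" using fermat_theorem[OF assms(1,2)] by (simp add: ord_divides')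
  moreover have "coprime (r ^ h) (r - 1)"
    using coprime_diff_one_right_nat[OF prime_gt_0_nat[OF assms(1)]] by simp
  ultimately have "is_unit (ord r q)" using coprime_common_divisor by blast
  hence "ord r q = Suc 0" by simp
  hence "[q = 1] (mod r)" by (simp add: ord_eq_Suc_0_iff)
  moreover have "1 \<le> q" using assms(2) by (cases q) auto
  ultimately show ?thesis by (simp add: cong_altdef_nat)
qed

subsection \<open>Embedding a finite field into a larger one\<close>

lemma ex_of_int_poly:
  fixes P :: "'a::comm_ring_1 poly"
  assumes "\<And>n. \<exists>z. coeff P n = of_int z"
  shows "\<exists>Q. P = of_int_poly Q"
  using assms
proof (induction P)
  case 0
  show ?case by (intro exI[of _ 0]) simp
next
  case (pCons a P)
  obtain z where z: "a = of_int z" using pCons.prems[of 0] by auto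
  have "\<exists>z. coeff P n = of_int z" for n using pCons.prems[of "Suc n"] by simp
  then obtain Q where "P = of_int_poly Q" using pCons.IH by blast
  thus ?case using z by (intro exI[of _ "pCons z Q"]) (simp add: of_int_hom.map_poly_pCons_hom)
qed

lemma field_hom_power_CHAR:
  assumes "prime CHAR('a::field)"
  shows "field_hom (\<lambda>x::'a. x ^ CHAR('a) ^ n)"
  by unfold_locales
    (simp_all add: freshmans_dream'[OF assms refl] power_mult_distrib prime_gt_0_nat[OF assms])

lemma map_poly_power_CHAR_of_int_poly:
  assumes "prime CHAR('a::field)"
  shows "map_poly (\<lambda>x::'a. x ^ CHAR('a) ^ n) (of_int_poly f) = of_int_poly f"
proof -
  interpret frob: field_hom "\<lambda>x::'a. x ^ CHAR('a) ^ n" by (rule field_hom_power_CHAR[OF assms])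
  show ?thesis by (rule poly_eqI) (simp add: coeff_map_poly frob.hom_of_int)
qed

lemma poly_of_int_poly_power_CHAR:
  assumes "prime CHAR('a::field)"
  shows "poly (of_int_poly f) (x ^ CHAR('a) ^ n) = poly (of_int_poly f) (x::'a) ^ CHAR('a) ^ n"
proof -
  interpret frob: field_hom "\<lambda>x::'a. x ^ CHAR('a) ^ n" by (rule field_hom_power_CHAR[OF assms])
  show ?thesis
    using frob.poly_map_poly[of "of_int_poly f" x] by (simp only: map_poly_power_CHAR_of_int_poly[OF assms])
qed

text \<open>The prime field consists of the roots of \<open>X ^ CHAR('a) - X\<close>.\<close>
lemma power_CHAR_fixed_imp_of_int:
  fixes x :: "'a::field"
  assumes "prime CHAR('a)" and "x ^ CHAR('a) = x"
  shows "\<exists>z. x = of_int z"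
proof -
  define p where "p = CHAR('a)"
  have p: "1 < p" unfolding p_def using assms(1) by (rule prime_gt_1_nat)
  define P :: "'a poly" where "P = monom 1 p - monom 1 1"
  have "coeff P p = 1" using p by (simp add: P_def)
  hence P0: "P \<noteq> 0" by auto
  have "degree P \<le> p" unfolding P_def using p by (intro degree_diff_le) (simp_all add: degree_monom_eq)
  hence "card {y. poly P y = 0} \<le> p" using card_poly_roots_bound[OF P0] by linarith
  have roots: "poly P y = 0 \<longleftrightarrow> y ^ p = y" for y by (simp add: P_def poly_monom)
  interpret frob: field_hom "\<lambda>x::'a. x ^ CHAR('a) ^ 1" by (rule field_hom_power_CHAR[OF assms(1)])
  have sub: "of_nat ` {..<p} \<subseteq> {y. poly P y = 0}"
    using frob.hom_of_nat by (auto simp: roots p_def)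
  have inj: "inj_on (of_nat :: nat \<Rightarrow> 'a) {..<p}"
  proof -
    have ne: "of_nat i \<noteq> (of_nat j :: 'a)" if "i < j" "j < p" for i j
    proof
      assume "of_nat i = (of_nat j :: 'a)"
      hence "p dvd j - i" using of_nat_eq_iff_char_dvd[OF that(1), where 'a='a] by (simp add: p_def)
      hence "p \<le> j - i" using that(1) by (intro dvd_imp_le) auto
      thus False using that(2) by simp
    qed
    show ?thesis
    proof (rule inj_onI)
      fix i j assume "i \<in> {..<p}" "j \<in> {..<p}" "of_nat i = (of_nat j :: 'a)"
      thus "i = j" using ne[of i j] ne[of j i] by (cases i j rule: linorder_cases) auto
    qed
  qed
  have "p = card (of_nat ` {..<p} :: 'a set)" using inj by (simp add: card_image)
  also have "\<dots> \<le> card {y. poly P y = 0}" using sub by (rule card_mono[OF poly_roots_finite[OF P0]])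
  finally have "card (of_nat ` {..<p} :: 'a set) = card {y. poly P y = 0}"
    using \<open>card {y. poly P y = 0} \<le> p\<close> inj by (simp add: card_image)
  hence "of_nat ` {..<p} = {y. poly P y = 0}" by (rule card_subset_eq[OF poly_roots_finite[OF P0] sub])
  moreover have "poly P x = 0" using assms(2) by (simp add: roots p_def)
  ultimately obtain j where "x = of_nat j" by blast
  thus ?thesis by (intro exI[of _ "int j"]) simp
qed

lemma frobenius_fixed_poly_eq_of_int_poly:
  assumes "prime CHAR('a::field)" and "map_poly (\<lambda>x::'a. x ^ CHAR('a)) P = P"
  shows "\<exists>Q. P = of_int_poly Q"
proof (rule ex_of_int_poly)
  fix n
  have "coeff P n ^ CHAR('a) = coeff P n"
    using arg_cong[OF assms(2), of "\<lambda>P. coeff P n"] prime_gt_0_nat[OF assms(1)]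
    by (simp add: coeff_map_poly)
  thus "\<exists>z. coeff P n = of_int z" by (rule power_CHAR_fixed_imp_of_int[OF assms(1)])
qed

lemma of_int_poly_eq_0_CHAR_iff:
  assumes "CHAR('a::comm_ring_1) = CHAR('b::comm_ring_1)"
  shows "of_int_poly f = (0 :: 'a poly) \<longleftrightarrow> of_int_poly f = (0 :: 'b poly)"
  using assms by (simp add: poly_eq_iff coeff_map_poly of_int_eq_0_iff_char_dvd)

lemma degree_of_int_poly_CHAR_eq:
  assumes "CHAR('a::comm_ring_1) = CHAR('b::comm_ring_1)"
  shows "degree (of_int_poly f :: 'a poly) = degree (of_int_poly f :: 'b poly)"
  using assms unfolding degree_def by (simp add: coeff_map_poly of_int_eq_0_iff_char_dvd)

lemma prod_linear_factors_dvd: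
  fixes P :: "'a::idom poly"
  assumes "finite C" and "\<And>c. c \<in> C \<Longrightarrow> poly P c = 0"
  shows "(\<Prod>c\<in>C. [:- c, 1:]) dvd P"
  using assms
proof (induction C arbitrary: P rule: finite_induct)
  case (insert c C)
  obtain Q where Q: "P = [:- c, 1:] * Q"
    using insert.prems[of c] by (auto simp: poly_eq_0_iff_dvd elim: dvdE)
  have "poly Q d = 0" if "d \<in> C" for d
  proof -
    have "(d - c) * poly Q d = 0" using insert.prems[of d] that by (simp add: Q algebra_simps)
    moreover have "d \<noteq> c" using that insert.hyps(2) by blast
    ultimately show ?thesis by simp
  qed
  hence "(\<Prod>c\<in>C. [:- c, 1:]) dvd Q" by (rule insert.IH)
  thus ?case unfolding Q prod.insert[OF insert.hyps] by (rule mult_dvd_mono[OF dvd_refl])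
qed simp

text \<open>An element \<open>\<gamma>\<close> of a finite field has an integer polynomial \<open>m\<close> generating the ideal of
  integer polynomials vanishing at \<open>\<gamma>\<close> modulo the characteristic: over the field, \<open>m\<close> is the product
  of \<open>X - c\<close> over the Frobenius conjugates \<open>c\<close> of \<open>\<gamma>\<close>, which is fixed by the Frobenius.\<close>
lemma ex_int_poly_generating_annihilator:
  fixes \<gamma> :: "'a::{finite,field}"
  assumes "prime CHAR('a)"
  shows "\<exists>m :: int poly. poly (of_int_poly m) \<gamma> = (0::'a) \<and> 0 < degree (of_int_poly m :: 'a poly) \<and>
    (\<forall>f. poly (of_int_poly f) \<gamma> = (0::'a) \<longrightarrow> (\<exists>h. of_int_poly (f - m * h) = (0 :: 'a poly)))"
proof -
  define Fr where "Fr = (\<lambda>x::'a. x ^ CHAR('a))"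
  interpret Fr: field_hom Fr unfolding Fr_def using field_hom_power_CHAR[OF assms, of 1] by simp
  interpret map_Fr: map_poly_comm_ring_hom Fr ..
  define C where "C = range (\<lambda>i. \<gamma> ^ CHAR('a) ^ i)"
  define mF where "mF = (\<Prod>c\<in>C. [:- c, 1:])"
  have "Fr (\<gamma> ^ CHAR('a) ^ i) \<in> C" for i
    unfolding C_def by (rule range_eqI[of _ _ "Suc i"]) (simp add: Fr_def mult.commute flip: power_mult)
  hence "Fr ` C \<subseteq> C" by (auto simp: C_def)
  moreover have inj: "inj_on Fr C" using Fr.inj_f by (rule inj_on_subset) simp
  ultimately have FrC: "Fr ` C = C" by (intro card_subset_eq) (simp_all add: card_image)
  have "map_poly Fr mF = (\<Prod>c\<in>C. [:- Fr c, 1:])"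
    unfolding mF_def by (simp add: map_Fr.hom_prod Fr.map_poly_pCons_hom Fr.hom_uminus)
  also have "\<dots> = mF" unfolding mF_def using prod.reindex[OF inj, of "\<lambda>c. [:- c, 1:]"] FrC by simp
  finally have Fr_mF: "map_poly Fr mF = mF" .
  then obtain m where m: "mF = of_int_poly m"
    using frobenius_fixed_poly_eq_of_int_poly[OF assms] unfolding Fr_def by blast
  have mF0: "mF \<noteq> 0" unfolding mF_def by simp
  have "\<gamma> \<in> C" unfolding C_def by (rule range_eqI[of _ _ 0]) simp
  hence root: "poly mF \<gamma> = 0" unfolding mF_def poly_prod by (auto simp: prod_zero_iff)
  show ?thesis
  proof (rule exI[of _ m], intro conjI allI impI)
    show "poly (of_int_poly m) \<gamma> = 0" using root m by simp
    show "0 < degree (of_int_poly m :: 'a poly)"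
    proof (rule ccontr)
      assume "\<not> 0 < degree (of_int_poly m :: 'a poly)"
      hence mF_eq: "mF = [:coeff mF 0:]" using degree_0_id[of mF] unfolding m by simp
      have "coeff mF 0 = 0" using root by (subst (asm) mF_eq) simp
      thus False using mF0 mF_eq by simp
    qed
  next
    fix f assume f: "poly (of_int_poly f) \<gamma> = (0::'a)"
    have "poly (of_int_poly f) c = (0::'a)" if "c \<in> C" for c
      using that f poly_of_int_poly_power_CHAR[OF assms] prime_gt_0_nat[OF assms] by (auto simp: C_def)
    hence "mF dvd of_int_poly f" unfolding mF_def by (intro prod_linear_factors_dvd) auto
    then obtain hF where hF: "of_int_poly f = mF * hF" by (elim dvdE)
    have "mF * map_poly Fr hF = mF * hF"
      using map_poly_power_CHAR_of_int_poly[OF assms, of 1 f]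
      by (simp add: hF Fr_mF map_Fr.hom_mult flip: Fr_def)
    hence "map_poly Fr hF = hF" using mF0 by simp
    then obtain h where "hF = of_int_poly h"
      using frobenius_fixed_poly_eq_of_int_poly[OF assms] unfolding Fr_def by blast
    thus "\<exists>h. of_int_poly (f - m * h) = (0 :: 'a poly)"
      using hF m by (auto simp: of_int_poly_hom.hom_minus of_int_poly_hom.hom_mult)
  qed
qed

text \<open>\<open>X ^ CARD('a) - X\<close> splits into distinct linear factors, so each of its factors of positive
  degree has a root.\<close>
lemma ex_root_of_dvd_frobenius_poly:
  fixes P :: "'a::{finite,field} poly"
  assumes "P dvd monom 1 CARD('a) - monom 1 1" and "0 < degree P"
  shows "\<exists>x. poly P x = 0"
proof (rule ccontr)
  assume no_root: "\<nexists>x. poly P x = 0"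
  obtain H where H: "monom 1 CARD('a) - monom 1 1 = P * H" using assms(1) by (elim dvdE)
  have card: "2 \<le> CARD('a)" by (rule finite_field_card_ge_2)
  have "coeff (P * H) CARD('a) = 1" unfolding H[symmetric] using card by simp
  hence "P * H \<noteq> 0" by auto
  hence "P \<noteq> 0" "H \<noteq> 0" by auto
  have "degree (monom 1 CARD('a) - monom 1 1 :: 'a poly) \<le> CARD('a)"
    using card by (intro degree_diff_le) (simp_all add: degree_monom_eq)
  hence "degree P + degree H \<le> CARD('a)" using H degree_mult_eq[OF \<open>P \<noteq> 0\<close> \<open>H \<noteq> 0\<close>] by simp
  moreover have "poly H x = 0" for x
  proof -
    have "poly P x * poly H x = 0"
      using arg_cong[OF H, of "\<lambda>Q. poly Q x"] by (simp add: poly_monom finite_field_pow_card)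
    thus ?thesis using no_root by simp
  qed
  hence "CARD('a) \<le> degree H" using card_poly_roots_bound[OF \<open>H \<noteq> 0\<close>] by simp
  ultimately show False using assms(2) by simp
qed

text \<open>Evaluation at \<open>\<gamma>\<close> followed by evaluation at \<open>\<delta>\<close> is well defined once every integer polynomial
  vanishing at \<open>\<gamma>\<close> vanishes at \<open>\<delta>\<close>.\<close>
lemma field_hom_of_eval:
  fixes \<gamma> :: "'a::field" and \<delta> :: "'b::field"
  assumes surj: "\<And>x. \<exists>f. x = poly (of_int_poly f) \<gamma>"
    and ker: "\<And>f. poly (of_int_poly f) \<gamma> = 0 \<Longrightarrow> poly (of_int_poly f) \<delta> = 0"
  shows "\<exists>\<phi> :: 'a \<Rightarrow> 'b. field_hom \<phi>"
proof -
  define \<phi> where "\<phi> x = poly (of_int_poly (SOME f. x = poly (of_int_poly f) \<gamma>)) \<delta>" for x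
  have \<phi>: "\<phi> (poly (of_int_poly f) \<gamma>) = poly (of_int_poly f) \<delta>" for f
  proof -
    define g where "g = (SOME g. poly (of_int_poly f) \<gamma> = poly (of_int_poly g) \<gamma>)"
    have "poly (of_int_poly f) \<gamma> = poly (of_int_poly g) \<gamma>" unfolding g_def by (rule someI) (rule refl)
    hence "poly (of_int_poly (f - g)) \<gamma> = 0" by (simp add: of_int_poly_hom.hom_minus)
    hence "poly (of_int_poly (f - g)) \<delta> = 0" by (rule ker)
    thus ?thesis by (simp add: \<phi>_def g_def of_int_poly_hom.hom_minus)
  qed
  have "field_hom \<phi>"
  proof
    show "\<phi> 0 = 0" using \<phi>[of 0] by simp
    show "\<phi> 1 = 1" using \<phi>[of 1] by simp
    fix x y
    obtain f g where "x = poly (of_int_poly f) \<gamma>" "y = poly (of_int_poly g) \<gamma>" using surj by blast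
    thus "\<phi> (x + y) = \<phi> x + \<phi> y" "\<phi> (x * y) = \<phi> x * \<phi> y"
      using \<phi>[of "f + g"] \<phi>[of "f * g"] \<phi>[of f] \<phi>[of g]
      by (simp_all add: of_int_poly_hom.hom_add of_int_poly_hom.hom_mult)
  qed
  thus ?thesis by blast
qed

theorem finite_field_embedding:
  assumes "prime p" and "CARD('a::{finite,field}) = p ^ a" and "CARD('b::{finite,field}) = p ^ (a * n)"
  shows "\<exists>\<phi> :: 'a \<Rightarrow> 'b. field_hom \<phi>"
proof -
  have char: "CHAR('a) = p" "CHAR('b) = p"
    using CHAR_finite_field[OF assms(1,2)] CHAR_finite_field[OF assms(1,3)] by simp_all
  hence "prime CHAR('a)" using assms(1) by simp
  obtain \<gamma> :: 'a where "(\<forall>x. x \<noteq> 0 \<longrightarrow> (\<exists>i. x = \<gamma> ^ i)) \<and> (\<forall>i. \<gamma> ^ i = 1 \<longleftrightarrow> (CARD('a) - 1) dvd i)"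
    using finite_field_generator[where 'a='a] by (rule exE)
  hence gen: "\<And>x. x \<noteq> 0 \<Longrightarrow> \<exists>i. x = \<gamma> ^ i" by simp
  obtain m where "poly (of_int_poly m) \<gamma> = 0 \<and> 0 < degree (of_int_poly m :: 'a poly) \<and>
      (\<forall>f. poly (of_int_poly f) \<gamma> = 0 \<longrightarrow> (\<exists>h. of_int_poly (f - m * h) = (0 :: 'a poly)))"
    using ex_int_poly_generating_annihilator[OF \<open>prime CHAR('a)\<close>, where \<gamma> = \<gamma>] by (rule exE)
  note m_deg = this[THEN conjunct2, THEN conjunct1] and m_ker = this[THEN conjunct2, THEN conjunct2]
  have ker: "of_int_poly m dvd (of_int_poly f :: 'b poly)" if f: "poly (of_int_poly f) \<gamma> = 0" for f
  proof -
    have "\<exists>h. of_int_poly (f - m * h) = (0 :: 'a poly)" using m_ker f by simp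
    then obtain h where "of_int_poly (f - m * h) = (0 :: 'a poly)" by (rule exE)
    hence "of_int_poly (f - m * h) = (0 :: 'b poly)"
      using of_int_poly_eq_0_CHAR_iff[where 'a='a and 'b='b] char by simp
    hence "of_int_poly f = (of_int_poly m * of_int_poly h :: 'b poly)"
      by (simp add: of_int_poly_hom.hom_minus of_int_poly_hom.hom_mult)
    thus ?thesis by simp
  qed
  define X :: "int poly" where "X = monom 1 CARD('b) - monom 1 1"
  have "\<gamma> ^ CARD('b) = \<gamma>" using finite_field_pow_card_power[of \<gamma> n] assms(2,3) by (simp add: power_mult)
  hence "poly (of_int_poly X) \<gamma> = 0" by (simp add: X_def of_int_poly_hom.hom_minus map_poly_monom poly_monom)
  moreover have "(of_int_poly X :: 'b poly) = monom 1 CARD('b) - monom 1 1"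
    by (simp add: X_def of_int_poly_hom.hom_minus map_poly_monom)
  ultimately have "of_int_poly m dvd (monom 1 CARD('b) - monom 1 1 :: 'b poly)"
    using ker by metis
  moreover have "0 < degree (of_int_poly m :: 'b poly)"
    using m_deg degree_of_int_poly_CHAR_eq[where 'a='a and 'b='b] char by simp
  ultimately obtain \<delta> :: 'b where \<delta>: "poly (of_int_poly m) \<delta> = 0"
    using ex_root_of_dvd_frobenius_poly by blast
  show ?thesis
  proof (rule field_hom_of_eval)
    show "\<exists>f. x = poly (of_int_poly f) \<gamma>" for x
    proof (cases "x = 0")
      case False
      then obtain i where "x = \<gamma> ^ i" using gen by blast
      thus ?thesis by (intro exI[of _ "monom 1 i"]) (simp add: map_poly_monom poly_monom)
    qed (intro exI[of _ 0], simp)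
    show "poly (of_int_poly f) \<delta> = 0" if "poly (of_int_poly f) \<gamma> = 0" for f
      using ker[OF that] \<delta> by (auto elim: dvdE)
  qed
qed

subsection \<open>A power basis of the extension\<close>

lemma inj_on_power_power:
  fixes \<theta> :: "'a::field" and q M R :: nat
  assumes "\<theta> \<noteq> 0" and "\<And>n. \<theta> ^ n = 1 \<longleftrightarrow> M dvd n" and "0 < q" and "coprime M q"
    and "\<And>d. 0 < d \<Longrightarrow> d < R \<Longrightarrow> \<not> M dvd q ^ d - 1"
  shows "inj_on (\<lambda>l. \<theta> ^ q ^ l) {..<R}"
proof -
  have ne: "\<theta> ^ q ^ l \<noteq> \<theta> ^ q ^ l'" if "l < l'" "l' < R" for l l'
  proof
    assume eq: "\<theta> ^ q ^ l = \<theta> ^ q ^ l'"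
    have "q ^ l \<le> q ^ l'" using that(1) assms(3) by (simp add: power_increasing)
    hence "\<theta> ^ q ^ l * \<theta> ^ (q ^ l' - q ^ l) = \<theta> ^ q ^ l'" by (simp flip: power_add)
    hence "\<theta> ^ q ^ l * \<theta> ^ (q ^ l' - q ^ l) = \<theta> ^ q ^ l * 1" using eq by simp
    hence "M dvd q ^ l' - q ^ l" using assms(1,2) by simp
    moreover have "q ^ l' - q ^ l = q ^ l * (q ^ (l' - l) - 1)"
      using that(1) by (simp add: diff_mult_distrib2 flip: power_add)
    moreover have "coprime M (q ^ l)" using assms(4) by simp
    ultimately have "M dvd q ^ (l' - l) - 1" by (simp add: coprime_dvd_mult_right_iff)
    moreover have "0 < l' - l" "l' - l < R" using that by auto
    ultimately show False using assms(5) by blast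
  qed
  show ?thesis
  proof (rule inj_onI)
    fix l l' assume "l \<in> {..<R}" "l' \<in> {..<R}" "\<theta> ^ q ^ l = \<theta> ^ q ^ l'"
    thus "l = l'" using ne[of l l'] ne[of l' l] by (cases l l' rule: linorder_cases) auto
  qed
qed

lemma poly_map_poly_field_hom_power:
  fixes \<phi> :: "'a::field \<Rightarrow> 'b::field"
  assumes "field_hom \<phi>" and "prime CHAR('b)" and "q = CHAR('b) ^ e" and "\<And>x::'a. x ^ q = x"
  shows "poly (map_poly \<phi> P) (y ^ q ^ l) = poly (map_poly \<phi> P) y ^ q ^ l"
proof -
  interpret \<phi>: field_hom \<phi> by fact
  interpret frob: field_hom "\<lambda>x::'b. x ^ CHAR('b) ^ (e * l)" by (rule field_hom_power_CHAR[OF assms(2)])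
  have ql: "q ^ l = CHAR('b) ^ (e * l)" using assms(3) by (simp add: power_mult)
  have "x ^ q ^ l = x" for x :: 'a by (induction l) (simp_all add: power_mult assms(4))
  hence "x ^ CHAR('b) ^ (e * l) = x" for x :: 'a by (simp only: ql)
  hence "map_poly (\<lambda>x::'b. x ^ CHAR('b) ^ (e * l)) (map_poly \<phi> P) = map_poly \<phi> P"
    by (intro poly_eqI) (simp add: coeff_map_poly frob.hom_zero flip: \<phi>.hom_power)
  thus ?thesis using frob.poly_map_poly[of "map_poly \<phi> P" y] ql by simp
qed

lemma power_basis_independent:
  fixes \<phi> :: "'a::field \<Rightarrow> 'b::field" and \<theta> :: 'b
  assumes "field_hom \<phi>" and "prime CHAR('b)" and "q = CHAR('b) ^ e" and "\<And>x::'a. x ^ q = x"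
    and "inj_on (\<lambda>l. \<theta> ^ q ^ l) {..<R}" and "(\<Sum>i<R. \<theta> ^ i * \<phi> (z i)) = 0"
  shows "\<forall>i<R. z i = 0"
proof (rule ccontr)
  interpret \<phi>: field_hom \<phi> by fact
  assume "\<not> (\<forall>i<R. z i = 0)"
  then obtain j where j: "j < R" "z j \<noteq> 0" by blast
  define P where "P = (\<Sum>i<R. monom (\<phi> (z i)) i)"
  have coeff: "coeff P n = (if n < R then \<phi> (z n) else 0)" for n
    unfolding P_def coeff_sum by (simp add: coeff_monom)
  have "P = map_poly \<phi> (\<Sum>i<R. monom (z i) i)"
    by (rule poly_eqI) (simp add: coeff coeff_map_poly coeff_sum coeff_monom)
  hence frob: "poly P (\<theta> ^ q ^ l) = poly P \<theta> ^ q ^ l" for l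
    using poly_map_poly_field_hom_power[OF assms(1-4)] by simp
  have P0: "P \<noteq> 0" using coeff[of j] j by auto
  have "degree P \<le> R - 1" by (rule degree_le) (auto simp: coeff)
  hence "degree P < R" using j by simp
  have "poly P \<theta> = 0" using assms(6) by (simp add: P_def poly_sum poly_monom mult.commute)
  hence "poly P (\<theta> ^ q ^ l) = 0" for l
    using frob prime_gt_0_nat[OF assms(2)] assms(3) by simp
  hence "(\<lambda>l. \<theta> ^ q ^ l) ` {..<R} \<subseteq> {x. poly P x = 0}" by auto
  hence "card ((\<lambda>l. \<theta> ^ q ^ l) ` {..<R}) \<le> card {x. poly P x = 0}"
    by (rule card_mono[OF poly_roots_finite[OF P0]])
  also have "\<dots> \<le> degree P" by (rule card_poly_roots_bound[OF P0])
  finally show False using assms(5) \<open>degree P < R\<close> by (simp add: card_image)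
qed

lemma finite_field_power_basis:
  fixes \<phi> :: "'a::{finite,field} \<Rightarrow> 'b::{finite,field}" and \<theta> :: 'b
  assumes "field_hom \<phi>" and "prime CHAR('b)" and "CARD('a) = CHAR('b) ^ e"
    and "CARD('b) = CARD('a) ^ R" and "inj_on (\<lambda>l. \<theta> ^ CARD('a) ^ l) {..<R}"
  shows "\<And>x y. (\<Sum>i<R. \<theta> ^ i * \<phi> (x i)) = (\<Sum>i<R. \<theta> ^ i * \<phi> (y i)) \<Longrightarrow> \<forall>i<R. x i = y i"
    and "\<And>e. \<exists>x. e = (\<Sum>i<R. \<theta> ^ i * \<phi> (x i))"
proof -
  interpret \<phi>: field_hom \<phi> by fact
  show uniq: "\<forall>i<R. x i = y i" if "(\<Sum>i<R. \<theta> ^ i * \<phi> (x i)) = (\<Sum>i<R. \<theta> ^ i * \<phi> (y i))" for x y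
  proof -
    have "(\<Sum>i<R. \<theta> ^ i * \<phi> (x i - y i)) = 0"
      using that by (simp add: \<phi>.hom_minus right_diff_distrib sum_subtractf)
    from power_basis_independent[OF assms(1,2,3) finite_field_pow_card assms(5) this]
    show ?thesis by simp
  qed
  define V where "V x = (\<Sum>i<R. \<theta> ^ i * \<phi> (x i))" for x
  define A where "A = PiE {..<R} (\<lambda>_. UNIV :: 'a set)"
  have "inj_on V A"
  proof (rule inj_onI)
    fix x y assume "x \<in> A" "y \<in> A" "V x = V y"
    thus "x = y" using uniq[of x y] unfolding A_def V_def by (intro PiE_ext) auto
  qed
  moreover have "card A = CARD('b)" unfolding A_def assms(4) by (simp add: card_PiE)
  ultimately have "V ` A = UNIV" by (intro card_subset_eq) (auto simp: card_image)
  thus "\<exists>x. e = (\<Sum>i<R. \<theta> ^ i * \<phi> (x i))" for e unfolding V_def by blast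
qed

subsection \<open>Transfer of Waring numbers\<close>

lemma field_hom_image_roots_of_unity:
  fixes \<phi> :: "'a::{finite,field} \<Rightarrow> 'b::{finite,field}"
  assumes "field_hom \<phi>" and "c dvd CARD('a) - 1" and "c dvd CARD('b) - 1"
  shows "\<phi> ` {g. g ^ c = 1} = {z. z ^ c = 1}"
proof (rule card_subset_eq)
  interpret \<phi>: field_hom \<phi> by fact
  show "\<phi> ` {g. g ^ c = 1} \<subseteq> {z. z ^ c = 1}" by (auto simp flip: \<phi>.hom_power)
  show "card (\<phi> ` {g. g ^ c = 1}) = card {z::'b. z ^ c = 1}"
    using card_finite_field_roots_of_unity[OF assms(2)] card_finite_field_roots_of_unity[OF assms(3)]
    by (simp add: card_image inj_on_subset[OF \<phi>.inj_f])
qed simp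

text \<open>The nonzero \<open>kE\<close>-th powers of the extension are the \<open>\<theta> ^ i\<close>-multiples of images of nonzero
  \<open>k\<close>-th powers: both sides are the \<open>(c * R)\<close>-th roots of unity.\<close>
lemma kth_powers_in_extension:
  fixes \<phi> :: "'a::{finite,field} \<Rightarrow> 'b::{finite,field}" and \<theta> :: 'b
  assumes "field_hom \<phi>" and "k * c = CARD('a) - 1" and "kE * (c * R) = CARD('b) - 1"
    and "\<And>n. \<theta> ^ n = 1 \<longleftrightarrow> c * R dvd n" and "\<And>y. y ^ (c * R) = 1 \<Longrightarrow> \<exists>i. y = \<theta> ^ i"
  shows "\<And>u. \<exists>i<R. \<exists>v. u ^ kE = \<theta> ^ i * \<phi> (v ^ k)"
    and "\<And>i v. \<exists>u. \<theta> ^ i * \<phi> (v ^ k) = u ^ kE"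
proof -
  interpret \<phi>: field_hom \<phi> by fact
  have pos: "0 < k" "0 < kE" "0 < R"
    using assms(2,3) finite_field_card_ge_2[where 'a='a] finite_field_card_ge_2[where 'a='b]
    by (auto intro!: Nat.gr0I)
  have "c dvd kE * (c * R)" by (intro dvd_mult dvd_triv_left)
  hence "c dvd CARD('b) - 1" by (simp only: assms(3))
  moreover have "c dvd CARD('a) - 1" by (simp only: assms(2)[symmetric] dvd_triv_right)
  ultimately have img: "\<phi> ` {g. g ^ c = 1} = {z. z ^ c = 1}"
    using field_hom_image_roots_of_unity[OF assms(1)] by blast
  show "\<exists>i<R. \<exists>v. u ^ kE = \<theta> ^ i * \<phi> (v ^ k)" for u
  proof (cases "u = 0")
    case False
    hence "(u ^ kE) ^ (c * R) = 1" using finite_field_roots_of_unity_eq_powers[OF assms(3)] by blast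
    then obtain m where m: "u ^ kE = \<theta> ^ m" using assms(5) by blast
    have eq: "(\<theta> ^ (R * (m div R))) ^ c = (\<theta> ^ (c * R)) ^ (m div R)" by (simp add: mult_ac flip: power_mult)
    have "\<theta> ^ (c * R) = 1" using assms(4) by simp
    hence "(\<theta> ^ (R * (m div R))) ^ c = 1" unfolding eq by simp
    then obtain g where g: "g ^ c = 1" "\<theta> ^ (R * (m div R)) = \<phi> g" using img by blast
    then obtain v where v: "g = v ^ k" using finite_field_roots_of_unity_eq_powers[OF assms(2)] by blast
    have "\<theta> ^ m = \<theta> ^ (m mod R) * \<theta> ^ (R * (m div R))" by (simp flip: power_add)
    hence "u ^ kE = \<theta> ^ (m mod R) * \<phi> (v ^ k)" using m g(2) v by simp
    thus ?thesis using pos by (intro exI[of _ "m mod R"] conjI exI[of _ v]) simp_all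
  next
    case True
    thus ?thesis using pos by (intro exI[of _ "0::nat"] conjI exI[of _ "0::'a"]) (simp_all add: zero_power)
  qed
  show "\<exists>u. \<theta> ^ i * \<phi> (v ^ k) = u ^ kE" for i v
  proof (cases "v = 0")
    case False
    have "(\<theta> ^ i) ^ (c * R) = 1" using assms(4) by (simp flip: power_mult)
    moreover have "(v ^ k) ^ c = 1" using False finite_field_roots_of_unity_eq_powers[OF assms(2)] by blast
    hence "\<phi> (v ^ k) ^ (c * R) = 1" by (simp add: power_mult flip: \<phi>.hom_power)
    ultimately have "(\<theta> ^ i * \<phi> (v ^ k)) ^ (c * R) = 1" by (simp add: power_mult_distrib)
    thus ?thesis using finite_field_roots_of_unity_eq_powers[OF assms(3)] by blast
  next
    case True
    thus ?thesis using pos by (intro exI[of _ "0::'b"]) (simp add: zero_power)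
  qed
qed

locale waring_extension =
  fixes \<phi> :: "'a::{finite,field} \<Rightarrow> 'b::{finite,field}" and \<theta> :: 'b and R k kE :: nat
  assumes field_hom: "field_hom \<phi>" and R_pos: "0 < R" and k_pos: "0 < k"
    and kth_power_cases: "\<And>u. \<exists>i<R. \<exists>v. u ^ kE = \<theta> ^ i * \<phi> (v ^ k)"
    and kth_power_exists: "\<And>i v. \<exists>u. \<theta> ^ i * \<phi> (v ^ k) = u ^ kE"
    and coordinates_unique:
      "\<And>x y. (\<Sum>i<R. \<theta> ^ i * \<phi> (x i)) = (\<Sum>i<R. \<theta> ^ i * \<phi> (y i)) \<Longrightarrow> \<forall>i<R. x i = y i"
    and coordinates_exist: "\<And>e::'b. \<exists>x. e = (\<Sum>i<R. \<theta> ^ i * \<phi> (x i))"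
begin

interpretation \<phi>: field_hom \<phi> by (rule field_hom)

lemma sum_of_kth_powers_upper:
  assumes "\<exists>s. \<forall>y::'a. sum_of_kth_powers k s y"
  shows "sum_of_kth_powers kE (R * waring_number k TYPE('a)) (e::'b)"
proof -
  obtain x where e: "e = (\<Sum>i<R. \<theta> ^ i * \<phi> (x i))" using coordinates_exist by blast
  have "sum_of_kth_powers kE (waring_number k TYPE('a)) (\<theta> ^ i * \<phi> (x i))" for i
    by (rule sum_of_kth_powers_image[where h = "\<lambda>z. \<theta> ^ i * \<phi> z", OF _ _ _ waring_number_spec[OF assms]])
      (simp_all add: \<phi>.hom_add distrib_left kth_power_exists)
  hence "sum_of_kth_powers kE (card {..<R} * waring_number k TYPE('a)) e"
    unfolding e by (intro sum_of_kth_powers_sum) auto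
  thus ?thesis by simp
qed

lemma sum_of_kth_powers_lower:
  assumes "\<And>e::'b. sum_of_kth_powers kE s e"
  shows "R * waring_number k TYPE('a) \<le> s"
proof -
  obtain w :: 'a where w: "\<And>s. sum_of_kth_powers k s w \<Longrightarrow> waring_number k TYPE('a) \<le> s"
    using waring_number_attained[OF k_pos] by blast
  obtain u where u: "(\<Sum>i<R. \<theta> ^ i * \<phi> w) = (\<Sum>j<s. u j ^ kE)"
    using sum_of_kth_powers_imp_sum[OF assms] by blast
  have "\<forall>j. \<exists>i. i < R \<and> (\<exists>v. u j ^ kE = \<theta> ^ i * \<phi> (v ^ k))" using kth_power_cases by blast
  then obtain \<iota> where "\<forall>j. \<iota> j < R \<and> (\<exists>v. u j ^ kE = \<theta> ^ \<iota> j * \<phi> (v ^ k))"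
    by (rule choice[THEN exE])
  hence \<iota>: "\<And>j. \<iota> j < R" and "\<forall>j. \<exists>v. u j ^ kE = \<theta> ^ \<iota> j * \<phi> (v ^ k)" by simp_all
  from this(2) obtain V where V: "\<forall>j. u j ^ kE = \<theta> ^ \<iota> j * \<phi> (V j ^ k)"
    by (rule choice[THEN exE])
  define J where "J i = {j \<in> {..<s}. \<iota> j = i}" for i
  have "(\<Sum>j<s. u j ^ kE) = (\<Sum>j<s. \<theta> ^ \<iota> j * \<phi> (V j ^ k))" using V by simp
  also have "\<dots> = (\<Sum>i<R. \<Sum>j\<in>J i. \<theta> ^ \<iota> j * \<phi> (V j ^ k))"
    unfolding J_def by (rule sum.group[symmetric]) (use \<iota> in auto)
  also have "\<dots> = (\<Sum>i<R. \<theta> ^ i * \<phi> (\<Sum>j\<in>J i. V j ^ k))"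
  proof (rule sum.cong[OF refl])
    fix i
    have "(\<Sum>j\<in>J i. \<theta> ^ \<iota> j * \<phi> (V j ^ k)) = (\<Sum>j\<in>J i. \<theta> ^ i * \<phi> (V j ^ k))"
      by (rule sum.cong) (simp_all add: J_def)
    thus "(\<Sum>j\<in>J i. \<theta> ^ \<iota> j * \<phi> (V j ^ k)) = \<theta> ^ i * \<phi> (\<Sum>j\<in>J i. V j ^ k)"
      by (simp only: \<phi>.hom_sum sum_distrib_left)
  qed
  finally have "(\<Sum>i<R. \<theta> ^ i * \<phi> w) = (\<Sum>i<R. \<theta> ^ i * \<phi> (\<Sum>j\<in>J i. V j ^ k))"
    using u by simp
  note w_eq = coordinates_unique[OF this]
  have card_J: "waring_number k TYPE('a) \<le> card (J i)" if "i < R" for i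
  proof (rule w)
    have "sum_of_kth_powers k (card (J i) * 1) (\<Sum>j\<in>J i. V j ^ k)"
      by (rule sum_of_kth_powers_sum) (simp add: J_def, rule sum_of_kth_powers_power)
    moreover have "w = (\<Sum>j\<in>J i. V j ^ k)" using w_eq that by blast
    ultimately show "sum_of_kth_powers k (card (J i)) w" by simp
  qed
  have "(\<Sum>i<R. waring_number k TYPE('a)) \<le> (\<Sum>i<R. card (J i))" by (rule sum_mono) (simp add: card_J)
  also have "\<dots> = (\<Sum>i<R. \<Sum>j\<in>J i. 1)" by simp
  also have "\<dots> = (\<Sum>j<s. 1)" unfolding J_def by (rule sum.group) (use \<iota> in auto)
  finally show ?thesis by simp
qed

theorem waring_number_extension:
  assumes "\<exists>s. \<forall>y::'a. sum_of_kth_powers k s y"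
  shows "waring_number kE TYPE('b) = R * waring_number k TYPE('a)"
proof (rule antisym)
  show "waring_number kE TYPE('b) \<le> R * waring_number k TYPE('a)"
    using sum_of_kth_powers_upper[OF assms] by (rule waring_number_le)
  have "sum_of_kth_powers kE (waring_number kE TYPE('b)) e" for e :: 'b
    using sum_of_kth_powers_upper[OF assms] by (intro waring_number_spec) blast
  thus "R * waring_number k TYPE('a) \<le> waring_number kE TYPE('b)" by (rule sum_of_kth_powers_lower)
qed

end

lemma waring_extension_of_root_of_unity:
  fixes \<phi> :: "'a::{finite,field} \<Rightarrow> 'b::{finite,field}" and \<theta> :: 'b
  assumes "field_hom \<phi>" and "prime p" and "CARD('a) = p ^ a" and "CARD('b) = CARD('a) ^ R"
    and "k * c = CARD('a) - 1" and "kE * (c * R) = CARD('b) - 1"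
    and "\<And>n. \<theta> ^ n = 1 \<longleftrightarrow> c * R dvd n" and "\<And>y. y ^ (c * R) = 1 \<Longrightarrow> \<exists>i. y = \<theta> ^ i"
    and "\<And>d. 0 < d \<Longrightarrow> d < R \<Longrightarrow> \<not> c * R dvd CARD('a) ^ d - 1"
  shows "waring_extension \<phi> \<theta> R k kE"
proof -
  have pos: "0 < k" "0 < c" "0 < R"
    using assms(5,6) finite_field_card_ge_2[where 'a='a] finite_field_card_ge_2[where 'a='b]
    by (auto intro!: Nat.gr0I)
  have "CARD('b) = p ^ (a * R)" using assms(3,4) by (simp add: power_mult)
  hence "CHAR('b) = p" by (rule CHAR_finite_field[OF assms(2)])
  hence char: "prime CHAR('b)" "CARD('a) = CHAR('b) ^ a" using assms(2,3) by simp_all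
  have "\<theta> \<noteq> 0" using assms(7)[of "c * R"] pos by (auto simp: zero_power)
  have "c * R dvd CARD('b) - 1" by (simp only: assms(6)[symmetric] dvd_triv_right)
  moreover have "CARD('a) dvd CARD('b)" using assms(4) pos by simp
  moreover have "coprime (CARD('b) - 1) CARD('b)"
    using coprime_diff_one_left_nat[of "CARD('b)"] finite_field_card_ge_2[where 'a='b] by simp
  ultimately have "coprime (c * R) CARD('a)" by (rule coprime_divisors)
  hence "inj_on (\<lambda>l. \<theta> ^ CARD('a) ^ l) {..<R}"
    using inj_on_power_power[OF \<open>\<theta> \<noteq> 0\<close> assms(7) _ _ assms(9)] finite_field_card_ge_2[where 'a='a]
    by simp
  note basis = finite_field_power_basis[OF assms(1) char assms(4) this]
  note kth = kth_powers_in_extension[OF assms(1,5,6,7,8)]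
  show ?thesis by (rule waring_extension.intro[OF assms(1) pos(3,1) kth basis])
qed


lemma prime_dvd_pred_of_order_condition:
  fixes q r t :: nat
  assumes "prime r" and "\<not> r dvd q" and "1 \<le> t"
    and "(r = 2 \<and> [q = 1] (mod 4)) \<or> (odd r \<and> (\<exists>h. h \<le> t - 1 \<and> ord (r ^ t) q = r ^ h))"
  shows "r dvd q - 1" and "r = 2 \<Longrightarrow> 4 dvd q - 1"
proof -
  have "1 \<le> q" using assms(2) by (cases q) auto
  have "r dvd q - 1 \<and> (r = 2 \<longrightarrow> 4 dvd q - 1)"
    using assms(4)
  proof (elim disjE conjE exE)
    assume "r = 2" "[q = 1] (mod 4)"
    hence "4 dvd q - 1" using \<open>1 \<le> q\<close> by (simp add: cong_altdef_nat)
    moreover have "(2::nat) dvd 4" by simp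
    ultimately show ?thesis using dvd_trans[of 2 4 "q - 1"] \<open>r = 2\<close> by simp
  next
    fix h assume "odd r" "ord (r ^ t) q = r ^ h"
    thus ?thesis using prime_dvd_minus_one_of_ord_prime_power[OF assms(1-3)] by auto
  qed
  thus "r dvd q - 1" "r = 2 \<Longrightarrow> 4 dvd q - 1" by simp_all
qed

theorem mainTheorem14:
  fixes p r a c t :: nat
  assumes "prime p" and "prime r" and "r \<noteq> p"
    and "a > 0" and "c > 0" and "t \<ge> 2"
    and "primitive_divisor c p a"
    and "coprime ((p ^ a - 1) div c) r"
    and "(r = 2 \<and> [p ^ a = 1] (mod 4)) \<or>
         (odd r \<and> (\<exists>h. h \<le> t - 1 \<and> ord (r ^ t) (p ^ a) = r ^ h))"
    and "card (UNIV :: 'F::{finite,field} set) = p ^ a"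
    and "card (UNIV :: 'E::{finite,field} set) = p ^ (a * r ^ t)"
  shows "waring_number ((p ^ (a * r ^ t) - 1) div (c * r ^ t)) TYPE('E)
         = r ^ t * waring_number ((p ^ a - 1) div c) TYPE('F)"
proof -
  have E: "CARD('E) = CARD('F) ^ r ^ t" using assms(10,11) by (simp add: power_mult)
  have "\<not> r dvd p ^ a" using assms(1-3) by (metis prime_dvd_power primes_dvd_imp_eq)
  note r_dvd = prime_dvd_pred_of_order_condition[OF assms(2) this _ assms(9)]
  have "c dvd p ^ a - 1" using assms(7) by (simp add: primitive_divisor_def)
  note lift = primitive_divisor_mult_prime_power[OF assms(2) _ this assms(8) r_dvd, where t = t]
  have "2 \<le> p ^ a" using finite_field_card_ge_2[where 'a='F] assms(10) by simp
  hence kc: "(p ^ a - 1) div c * c = CARD('F) - 1"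
    and kEc: "(p ^ (a * r ^ t) - 1) div (c * r ^ t) * (c * r ^ t) = CARD('E) - 1"
    using \<open>c dvd p ^ a - 1\<close> lift(1) assms(6,10,11) by (simp_all add: power_mult)
  obtain \<phi> :: "'F \<Rightarrow> 'E" where \<phi>: "field_hom \<phi>" using finite_field_embedding[OF assms(1,10,11)] by blast
  have "c * r ^ t dvd CARD('E) - 1" by (simp only: kEc[symmetric] dvd_triv_right)
  then obtain \<theta> :: 'E
    where "(\<forall>n. \<theta> ^ n = 1 \<longleftrightarrow> c * r ^ t dvd n) \<and> (\<forall>y. y ^ (c * r ^ t) = 1 \<longrightarrow> (\<exists>i. y = \<theta> ^ i))"
    by (rule finite_field_root_of_unity[THEN exE])
  hence \<theta>: "\<And>n. \<theta> ^ n = 1 \<longleftrightarrow> c * r ^ t dvd n" "\<And>y. y ^ (c * r ^ t) = 1 \<Longrightarrow> \<exists>i. y = \<theta> ^ i"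
    by simp_all
  have below: "\<And>d. 0 < d \<Longrightarrow> d < r ^ t \<Longrightarrow> \<not> c * r ^ t dvd CARD('F) ^ d - 1"
    using lift(2) \<open>2 \<le> p ^ a\<close> assms(6,10) by simp
  interpret waring_extension \<phi> \<theta> "r ^ t" "(p ^ a - 1) div c" "(p ^ (a * r ^ t) - 1) div (c * r ^ t)"
    by (rule waring_extension_of_root_of_unity[OF \<phi> assms(1,10) E kc kEc \<theta> below])
  have "\<exists>s. \<forall>y::'F. sum_of_kth_powers ((p ^ a - 1) div c) s y"
    by (rule ex_waring_bound[OF assms(1,10) kc assms(7)])
  thus ?thesis by (rule waring_number_extension)
qed

end
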